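(* If the critical set $C_{\mathcal A,a}$ is nonempty, then it is a smooth $n$-dimensional subvariety of $U(\mathcal A)\subset\mathbb C^n\times\mathbb C^k$.
   Context: Let $0<k<n$, $J=\{1,\dots,n\}$. On $\mathbb C^k$ (coordinates $t_1,\dots,t_k$) fix nonzero linear functions $g_j=b^1_jt_1+\dots+b^k_jt_k$, $j\in J$, that span the dual space $(\mathbb C^k)^*$. On $\mathbb C^n\times\mathbb C^k$ (coordinates $z_1,\dots,z_n,t_1,\dots,t_k$) let $f_j=g_j+z_j$, $H_j=\{f_j=0\}$, and $U(\mathcal A)=\mathbb C^n\times\mathbb C^k\setminus\bigcup_jH_j$. Fix $a\in(\mathbb C^\times)^n$ and the (multivalued) master function $\Phi_{\mathcal A,a}=\sum_ja_j\log f_j$. The critical set is $C_{\mathcal A,a}=\{(x,u)\in U(\mathcal A):\partial\Phi_{\mathcal A,a}/\partial t_i(x,u)=0,\ i=1,\dots,k\}$, where $\partial\Phi_{\mathcal A,a}/\partial t_i=\sum_jb^i_ja_j/f_j$. *)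

theory Defs
  imports "HOL-Analysis.Analysis"
begin

text \<open>Ambient space: C^n x C^k, points (x,u) with x :: complex^'n (the z-coordinates)
  and u :: complex^'k (the t-coordinates). The coefficient b^i_j is  b j $ i.\<close>

definition cscale :: "complex \<Rightarrow> ((complex^'n) \<times> (complex^'k)) \<Rightarrow> ((complex^'n) \<times> (complex^'k))" where
  "cscale c p = (c *s fst p, c *s snd p)"

definition holo_map_on ::
  "((complex^'n) \<times> (complex^'k)) set \<Rightarrow> (((complex^'n) \<times> (complex^'k)) \<Rightarrow> ((complex^'n) \<times> (complex^'k))) \<Rightarrow> bool" where
  "holo_map_on S f \<longleftrightarrow> (\<forall>p\<in>S. \<exists>D. (f has_derivative D) (at p) \<and>
      (\<forall>v. D (cscale \<i> v) = cscale \<i> (D v)))"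

definition holo_fun_on ::
  "((complex^'n) \<times> (complex^'k)) set \<Rightarrow> (((complex^'n) \<times> (complex^'k)) \<Rightarrow> complex) \<Rightarrow> bool" where
  "holo_fun_on S h \<longleftrightarrow> (\<forall>p\<in>S. \<exists>D. (h has_derivative D) (at p) \<and>
      (\<forall>v. D (cscale \<i> v) = \<i> * D v))"

definition analytic_subvariety ::
  "((complex^'n) \<times> (complex^'k)) set \<Rightarrow> ((complex^'n) \<times> (complex^'k)) set \<Rightarrow> bool" where
  "analytic_subvariety U M \<longleftrightarrow> M \<subseteq> U \<and> closedin (top_of_set U) M \<and>
     (\<forall>p\<in>U. \<exists>W F. open W \<and> p \<in> W \<and> W \<subseteq> U \<and> finite F \<and>
        (\<forall>h\<in>F. holo_fun_on W h) \<and> M \<inter> W = {q\<in>W. \<forall>h\<in>F. h q = 0})"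

text \<open>M is a smooth complex submanifold of dimension CARD('n) of C^n x C^k:
  around each of its points there is a biholomorphic chart of the ambient space
  straightening M onto the coordinate subspace C^n x {0}.\<close>
definition smooth_submanifold_dimn :: "((complex^'n) \<times> (complex^'k)) set \<Rightarrow> bool" where
  "smooth_submanifold_dimn M \<longleftrightarrow> (\<forall>p\<in>M. \<exists>W V \<phi> \<psi>.
      open W \<and> p \<in> W \<and> open V \<and> \<phi> ` W = V \<and> \<psi> ` V = W \<and>
      (\<forall>w\<in>W. \<psi> (\<phi> w) = w) \<and> (\<forall>v\<in>V. \<phi> (\<psi> v) = v) \<and>
      holo_map_on W \<phi> \<and> holo_map_on V \<psi> \<and>
      \<phi> ` (M \<inter> W) = V \<inter> {q. snd q = 0})"

definition gfun :: "('n \<Rightarrow> complex^'k) \<Rightarrow> 'n \<Rightarrow> complex^'k \<Rightarrow> complex" where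
  "gfun b j t = (\<Sum>i\<in>UNIV. b j $ i * t $ i)"

definition ffun :: "('n \<Rightarrow> complex^'k) \<Rightarrow> 'n \<Rightarrow> ((complex^'n) \<times> (complex^'k)) \<Rightarrow> complex" where
  "ffun b j p = gfun b j (snd p) + fst p $ j"

definition Ucomp :: "('n \<Rightarrow> complex^'k) \<Rightarrow> ((complex^'n) \<times> (complex^'k)) set" where
  "Ucomp b = {p. \<forall>j. ffun b j p \<noteq> 0}"

definition crit_set :: "('n \<Rightarrow> complex^'k) \<Rightarrow> complex^'n \<Rightarrow> ((complex^'n) \<times> (complex^'k)) set" where
  "crit_set b a = {p \<in> Ucomp b. \<forall>i. (\<Sum>j\<in>UNIV. b j $ i * a $ j / ffun b j p) = 0}"

end

theory Submission
  imports Defs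
begin

(* In the coordinates w_j = 1/f_j, the map (x,u) |-> (w,u) is a biholomorphism of U(A) onto
   (C - {0})^n x C^k with inverse (w,u) |-> (1/w_j - g_j(u), u), and the critical equations
   become the linear equations sum_j a_j w_j b_j = 0 in C^k. Since the b_j span and no a_j
   vanishes, picking J such that (b_j)_{j in J} is a basis and trading w_J for u turns
   (w,u) |-> (w, sum_j a_j w_j b_j) into a linear automorphism of C^n x C^k. The composite is a
   single global chart of U(A) in which C_{A,a} is the coordinate subspace C^n x 0. *)

type_synonym ('n, 'k) point = "(complex^'n) \<times> (complex^'k)"

lemma bounded_linear_axis: "bounded_linear (axis j :: 'a::real_normed_vector \<Rightarrow> 'a^'n::finite)"
proof (rule bounded_linear_intro[where K=1])
  fix x :: 'a
  have "norm (axis j x :: 'a^'n) = sqrt (\<Sum>i\<in>UNIV. if i = j then (norm x)\<^sup>2 else 0)"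
    unfolding norm_vec_def L2_set_def by (intro arg_cong[where f=sqrt] sum.cong) (auto simp: axis_def)
  then show "norm (axis j x :: 'a^'n) \<le> norm x * 1" by simp
qed (simp_all add: vec_eq_iff axis_def)

lemma vec_eq_sum_axis: "(f::'a::real_normed_vector^'n::finite) = (\<Sum>j\<in>UNIV. axis j (f $ j))"
  by (simp add: vec_eq_iff sum_component axis_def)

lemma has_derivative_vec_lambda:
  fixes f :: "'b::real_normed_vector \<Rightarrow> 'a::real_normed_vector^'n::finite"
  assumes "\<And>j. ((\<lambda>x. f x $ j) has_derivative (\<lambda>h. f' h $ j)) F"
  shows "(f has_derivative f') F"
proof -
  have "((\<lambda>x. \<Sum>j\<in>UNIV. axis j (f x $ j)) has_derivative (\<lambda>h. \<Sum>j\<in>UNIV. axis j (f' h $ j))) F"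
    by (intro has_derivative_sum bounded_linear.has_derivative[OF bounded_linear_axis] assms)
  then show ?thesis by (simp flip: vec_eq_sum_axis)
qed

lemma holo_map_on_compose:
  assumes f: "holo_map_on S f" and g: "holo_map_on T g" and fST: "f ` S \<subseteq> T"
  shows "holo_map_on S (g \<circ> f)"
  unfolding holo_map_on_def
proof
  fix p assume p: "p \<in> S"
  obtain Df where Df: "(f has_derivative Df) (at p)" "\<forall>v. Df (cscale \<i> v) = cscale \<i> (Df v)"
    using f p unfolding holo_map_on_def by blast
  obtain Dg where Dg: "(g has_derivative Dg) (at (f p))" "\<forall>v. Dg (cscale \<i> v) = cscale \<i> (Dg v)"
    using g fST p unfolding holo_map_on_def by blast
  show "\<exists>D. (g \<circ> f has_derivative D) (at p) \<and> (\<forall>v. D (cscale \<i> v) = cscale \<i> (D v))"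
  proof (intro exI conjI allI)
    show "(g \<circ> f has_derivative Dg \<circ> Df) (at p)"
      using has_derivative_compose[OF Df(1) Dg(1)] by (simp add: o_def)
    show "(Dg \<circ> Df) (cscale \<i> v) = cscale \<i> ((Dg \<circ> Df) v)" for v
      by (simp add: Df(2) Dg(2))
  qed
qed

lemma holo_map_on_linear:
  fixes L :: "('n::finite, 'k::finite) point \<Rightarrow> ('n, 'k) point"
  assumes "linear L" and "\<And>v. L (cscale \<i> v) = cscale \<i> (L v)"
  shows "holo_map_on S L"
  unfolding holo_map_on_def
  using assms bounded_linear_imp_has_derivative[of L] by (auto simp: linear_conv_bounded_linear)

lemma holo_fun_on_linear:
  fixes L :: "('n::finite, 'k::finite) point \<Rightarrow> complex"
  assumes "linear L" and "\<And>v. L (cscale \<i> v) = \<i> * L v"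
  shows "holo_fun_on S L"
  unfolding holo_fun_on_def
  using assms bounded_linear_imp_has_derivative[of L] by (auto simp: linear_conv_bounded_linear)

lemma holo_fun_on_diff:
  assumes f: "holo_fun_on S f" and g: "holo_fun_on S g"
  shows "holo_fun_on S (\<lambda>p. f p - g p)"
  unfolding holo_fun_on_def
proof
  fix p assume p: "p \<in> S"
  obtain Df where Df: "(f has_derivative Df) (at p)" "\<forall>v. Df (cscale \<i> v) = \<i> * Df v"
    using f p unfolding holo_fun_on_def by blast
  obtain Dg where Dg: "(g has_derivative Dg) (at p)" "\<forall>v. Dg (cscale \<i> v) = \<i> * Dg v"
    using g p unfolding holo_fun_on_def by blast
  show "\<exists>D. ((\<lambda>p. f p - g p) has_derivative D) (at p) \<and> (\<forall>v. D (cscale \<i> v) = \<i> * D v)"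
    using has_derivative_diff[OF Df(1) Dg(1)] Df(2) Dg(2) by (auto simp: right_diff_distrib)
qed

lemma holo_fun_on_inverse:
  assumes f: "holo_fun_on S f" and nz: "\<forall>p\<in>S. f p \<noteq> 0"
  shows "holo_fun_on S (\<lambda>p. inverse (f p))"
  unfolding holo_fun_on_def
proof
  fix p assume p: "p \<in> S"
  obtain D where D: "(f has_derivative D) (at p)" "\<forall>v. D (cscale \<i> v) = \<i> * D v"
    using f p unfolding holo_fun_on_def by blast
  have "((\<lambda>p. inverse (f p)) has_derivative (\<lambda>v. - (inverse (f p) * D v * inverse (f p)))) (at p)"
    using D(1) nz p by (auto intro!: derivative_eq_intros)
  moreover have "\<forall>v. - (inverse (f p) * D (cscale \<i> v) * inverse (f p)) = \<i> * - (inverse (f p) * D v * inverse (f p))"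
    using D(2) by (simp add: mult_ac)
  ultimately show "\<exists>D. ((\<lambda>p. inverse (f p)) has_derivative D) (at p) \<and> (\<forall>v. D (cscale \<i> v) = \<i> * D v)"
    by blast
qed

lemma holo_map_on_coordinatewise:
  fixes f :: "('n::finite, 'k::finite) point \<Rightarrow> ('n, 'k) point"
  assumes fst: "\<And>j. holo_fun_on S (\<lambda>p. fst (f p) $ j)"
    and snd: "\<And>i. holo_fun_on S (\<lambda>p. snd (f p) $ i)"
  shows "holo_map_on S f"
  unfolding holo_map_on_def
proof
  fix p assume p: "p \<in> S"
  have "\<forall>j. \<exists>D. ((\<lambda>p. fst (f p) $ j) has_derivative D) (at p) \<and> (\<forall>v. D (cscale \<i> v) = \<i> * D v)"
    using fst p unfolding holo_fun_on_def by blast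
  from choice[OF this] obtain D1 where D1: "\<And>j. ((\<lambda>p. fst (f p) $ j) has_derivative D1 j) (at p)"
      "\<And>j v. D1 j (cscale \<i> v) = \<i> * D1 j v"
    by blast
  have "\<forall>i. \<exists>D. ((\<lambda>p. snd (f p) $ i) has_derivative D) (at p) \<and> (\<forall>v. D (cscale \<i> v) = \<i> * D v)"
    using snd p unfolding holo_fun_on_def by blast
  from choice[OF this] obtain D2 where D2: "\<And>i. ((\<lambda>p. snd (f p) $ i) has_derivative D2 i) (at p)"
      "\<And>i v. D2 i (cscale \<i> v) = \<i> * D2 i v"
    by blast
  define D where "D v = ((\<chi> j. D1 j v), (\<chi> i. D2 i v))" for v
  have "((\<lambda>p. (fst (f p), snd (f p))) has_derivative D) (at p)"
    unfolding D_def by (intro has_derivative_Pair has_derivative_vec_lambda) (simp_all add: D1 D2)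
  moreover have "D (cscale \<i> v) = cscale \<i> (D v)" for v
    unfolding D_def D1(2) D2(2) by (simp add: cscale_def vec_eq_iff)
  ultimately show "\<exists>D. (f has_derivative D) (at p) \<and> (\<forall>v. D (cscale \<i> v) = cscale \<i> (D v))"
    by auto
qed

lemma holo_fun_on_snd_component:
  assumes "holo_map_on S f"
  shows "holo_fun_on S (\<lambda>p. snd (f p) $ i)"
  unfolding holo_fun_on_def
proof
  fix p assume "p \<in> S"
  then obtain D where D: "(f has_derivative D) (at p)" "\<forall>v. D (cscale \<i> v) = cscale \<i> (D v)"
    using assms unfolding holo_map_on_def by blast
  have "((\<lambda>p. snd (f p) $ i) has_derivative (\<lambda>v. snd (D v) $ i)) (at p)"
    by (intro bounded_linear.has_derivative[OF bounded_linear_vec_nth] has_derivative_snd D(1))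
  then show "\<exists>D. ((\<lambda>p. snd (f p) $ i) has_derivative D) (at p) \<and> (\<forall>v. D (cscale \<i> v) = \<i> * D v)"
    using D(2) by (auto simp: cscale_def)
qed

lemma holo_map_on_imp_continuous_on: "holo_map_on S f \<Longrightarrow> continuous_on S f"
  unfolding holo_map_on_def by (meson continuous_at_imp_continuous_on has_derivative_continuous)

lemma holo_fun_on_fst_nth: "holo_fun_on S (\<lambda>p. fst p $ j)"
  by (rule holo_fun_on_linear) (auto intro!: linearI simp: cscale_def)

lemma holo_fun_on_snd_nth: "holo_fun_on S (\<lambda>p. snd p $ i)"
  by (rule holo_fun_on_linear) (auto intro!: linearI simp: cscale_def)

definition biholomorphic_on ::
    "('n::finite, 'k::finite) point set \<Rightarrow> ('n, 'k) point set
     \<Rightarrow> (('n, 'k) point \<Rightarrow> ('n, 'k) point) \<Rightarrow> (('n, 'k) point \<Rightarrow> ('n, 'k) point) \<Rightarrow> bool" where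
  "biholomorphic_on W V \<phi> \<psi> \<longleftrightarrow> \<phi> ` W = V \<and> \<psi> ` V = W \<and>
     (\<forall>w\<in>W. \<psi> (\<phi> w) = w) \<and> (\<forall>v\<in>V. \<phi> (\<psi> v) = v) \<and> holo_map_on W \<phi> \<and> holo_map_on V \<psi>"

lemma biholomorphic_on_compose:
  assumes "biholomorphic_on W T f g" and "biholomorphic_on T V f' g'"
  shows "biholomorphic_on W V (f' \<circ> f) (g \<circ> g')"
proof -
  have images: "f ` W = T" "g' ` V = T" "f' ` T = V" "g ` T = W"
    using assms unfolding biholomorphic_on_def by auto
  then have "(f' \<circ> f) ` W = V" "(g \<circ> g') ` V = W"
    by (metis image_comp)+
  moreover have "holo_map_on W (f' \<circ> f)" "holo_map_on V (g \<circ> g')"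
    using assms images by (auto simp: biholomorphic_on_def intro!: holo_map_on_compose)
  ultimately show ?thesis
    using assms images unfolding biholomorphic_on_def by auto
qed

lemma biholomorphic_on_linear_automorphism:
  fixes L :: "('n::finite, 'k::finite) point \<Rightarrow> ('n, 'k) point"
  assumes lin: "linear L" and inj: "inj L" and cscale: "\<And>v. L (cscale \<i> v) = cscale \<i> (L v)"
  shows "biholomorphic_on T (L ` T) L (inv L)"
proof -
  have surj: "surj L"
    using lin inj by (rule linear_injective_imp_surjective) (rule refl)
  have inv_cscale: "inv L (cscale \<i> v) = cscale \<i> (inv L v)" for v
    by (metis cscale inj inv_f_f surj surj_f_inv_f)
  show ?thesis
    unfolding biholomorphic_on_def
    using holo_map_on_linear[OF lin cscale] holo_map_on_linear[OF inj_linear_imp_inv_linear[OF lin inj] inv_cscale]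
    by (auto simp: inv_f_f[OF inj] surj_f_inv_f[OF surj] image_comp)
qed

lemma analytic_subvariety_snd_eq_0:
  assumes "open W" and \<phi>: "holo_map_on W \<phi>"
  shows "analytic_subvariety W {p\<in>W. snd (\<phi> p) = 0}"
  unfolding analytic_subvariety_def
proof (intro conjI ballI)
  have "continuous_on W (snd \<circ> \<phi>)"
    by (intro continuous_on_compose continuous_on_snd continuous_on_id holo_map_on_imp_continuous_on \<phi>)
  then show "closedin (top_of_set W) {p\<in>W. snd (\<phi> p) = 0}"
    using continuous_closedin_preimage_constant by fastforce
  fix p assume "p \<in> W"
  let ?F = "range (\<lambda>i q. snd (\<phi> q) $ i)"
  have "\<forall>h\<in>?F. holo_fun_on W h"
    using holo_fun_on_snd_component[OF \<phi>] by blast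
  moreover have "{p\<in>W. snd (\<phi> p) = 0} \<inter> W = {q\<in>W. \<forall>h\<in>?F. h q = 0}"
    by (auto simp: vec_eq_iff)
  ultimately show "\<exists>W' F. open W' \<and> p \<in> W' \<and> W' \<subseteq> W \<and> finite F \<and> (\<forall>h\<in>F. holo_fun_on W' h) \<and>
      {p\<in>W. snd (\<phi> p) = 0} \<inter> W' = {q\<in>W'. \<forall>h\<in>F. h q = 0}"
    using \<open>open W\<close> \<open>p \<in> W\<close> by (intro exI[of _ W] exI[of _ ?F]) auto
qed auto

lemma smooth_submanifold_dimn_snd_eq_0:
  assumes "open W" and "open V" and bihol: "biholomorphic_on W V \<phi> \<psi>"
  shows "smooth_submanifold_dimn {p\<in>W. snd (\<phi> p) = 0}"
  unfolding smooth_submanifold_dimn_def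
proof
  fix p assume "p \<in> {p\<in>W. snd (\<phi> p) = 0}"
  moreover have "\<phi> ` ({p\<in>W. snd (\<phi> p) = 0} \<inter> W) = V \<inter> {q. snd q = 0}"
    using bihol unfolding biholomorphic_on_def by force
  ultimately show "\<exists>W' V' \<phi>' \<psi>'. open W' \<and> p \<in> W' \<and> open V' \<and> \<phi>' ` W' = V' \<and> \<psi>' ` V' = W' \<and>
      (\<forall>w\<in>W'. \<psi>' (\<phi>' w) = w) \<and> (\<forall>v\<in>V'. \<phi>' (\<psi>' v) = v) \<and> holo_map_on W' \<phi>' \<and> holo_map_on V' \<psi>' \<and>
      \<phi>' ` ({p\<in>W. snd (\<phi> p) = 0} \<inter> W') = V' \<inter> {q. snd q = 0}"
    using assms unfolding biholomorphic_on_def by blast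
qed

lemma spanning_family_contains_basis:
  fixes b :: "'n \<Rightarrow> 'a::field^'k::finite"
  assumes "vec.span (range b) = UNIV"
  obtains J and e :: "'n \<Rightarrow> 'k" where "inj_on b J" "vec.independent (b ` J)" "bij_betw e J UNIV"
proof -
  obtain B where B: "B \<subseteq> range b" "vec.independent B" "range b \<subseteq> vec.span B"
    by (rule vec.maximal_independent_subset)
  have "UNIV \<subseteq> vec.span B"
    using assms B(3) by (metis vec.span_mono vec.span_span)
  then have "card B = vec.dim (UNIV :: ('a^'k) set)"
    using B(2) by (intro vec.basis_card_eq_dim) auto
  then have "card B = CARD('k)"
    by (metis vec_dim_card)
  obtain J where J: "inj_on b J" "B = b ` J"
    using B(1) subset_image_inj[of B b UNIV] by blast
  have "finite J"
    using vec.finiteI_independent[OF B(2)] J by (simp add: finite_image_iff)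
  moreover have "card J = CARD('k)"
    using J \<open>card B = CARD('k)\<close> by (simp add: card_image)
  ultimately obtain e :: "'n \<Rightarrow> 'k" where "bij_betw e J UNIV"
    using finite_same_card_bij[of J "UNIV :: 'k set"] by auto
  then show ?thesis
    using that J B(2) by blast
qed

lemma independent_image_sum_eq_0:
  fixes b :: "'n \<Rightarrow> 'a::field^'k::finite"
  assumes "inj_on b J" "vec.independent (b ` J)" "finite J"
    and "(\<Sum>j\<in>J. c j *s b j) = 0" "j \<in> J"
  shows "c j = 0"
proof -
  have "(\<Sum>v\<in>b ` J. c (inv_into J b v) *s v) = 0"
    using assms(4) by (simp add: sum.reindex[OF assms(1)] inv_into_f_f[OF assms(1)])
  then have "c (inv_into J b (b j)) = 0"
    using assms by (intro vec.independentD[OF assms(2)]) auto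
  then show ?thesis
    by (simp add: inv_into_f_f[OF assms(1) assms(5)])
qed

definition torus :: "(complex^'n::finite) set" where
  "torus = {w. \<forall>j. w $ j \<noteq> 0}"

lemma open_torus: "open (torus :: (complex^'n::finite) set)"
proof -
  have "open {w::complex^'n. w $ j \<noteq> 0}" for j
    by (rule open_Collect_neq) (auto intro!: linear_continuous_on bounded_linear_vec_nth)
  then have "open (\<Inter>j. {w::complex^'n. w $ j \<noteq> 0})" by (auto intro!: open_INT)
  moreover have "torus = (\<Inter>j. {w::complex^'n. w $ j \<noteq> 0})" by (auto simp: torus_def)
  ultimately show ?thesis by simp
qed

lemma holo_fun_on_gfun: "holo_fun_on S (\<lambda>p. gfun b j (snd p))"
  by (rule holo_fun_on_linear)
    (auto intro!: linearI simp: gfun_def cscale_def sum.distrib sum_distrib_left scaleR_sum_right algebra_simps)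

lemma holo_fun_on_ffun: "holo_fun_on S (ffun b j)"
  unfolding ffun_def[abs_def] by (rule holo_fun_on_linear)
    (auto intro!: linearI simp: gfun_def cscale_def sum.distrib sum_distrib_left scaleR_sum_right algebra_simps)

lemma open_Ucomp: "open (Ucomp b)"
proof -
  have "continuous_on UNIV (ffun b j)" for j
    using holo_fun_on_ffun[of UNIV b j]
    by (metis has_derivative_continuous continuous_at_imp_continuous_on holo_fun_on_def)
  moreover have "Ucomp b = (\<Inter>j. {p. ffun b j p \<noteq> 0})" by (auto simp: Ucomp_def)
  ultimately show ?thesis
    by (auto intro!: open_INT open_Collect_neq)
qed

definition recip_chart :: "('n::finite \<Rightarrow> complex^'k::finite) \<Rightarrow> ('n, 'k) point \<Rightarrow> ('n, 'k) point" where
  "recip_chart b p = ((\<chi> j. inverse (ffun b j p)), snd p)"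

definition recip_chart_inv :: "('n::finite \<Rightarrow> complex^'k::finite) \<Rightarrow> ('n, 'k) point \<Rightarrow> ('n, 'k) point" where
  "recip_chart_inv b q = ((\<chi> j. inverse (fst q $ j) - gfun b j (snd q)), snd q)"

(* Both identities hold everywhere, not only on the chart domains, because inverse 0 = 0. *)
lemma recip_chart_inv_recip_chart [simp]: "recip_chart_inv b (recip_chart b p) = p"
  by (simp add: recip_chart_def recip_chart_inv_def ffun_def vec_eq_iff prod_eq_iff)

lemma recip_chart_recip_chart_inv [simp]: "recip_chart b (recip_chart_inv b q) = q"
  by (simp add: recip_chart_def recip_chart_inv_def ffun_def vec_eq_iff prod_eq_iff)

lemma biholomorphic_on_recip_chart:
  "biholomorphic_on (Ucomp b) (torus \<times> UNIV) (recip_chart b) (recip_chart_inv b)"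
proof -
  have maps_to: "recip_chart b ` Ucomp b \<subseteq> torus \<times> UNIV"
    by (auto simp: recip_chart_def Ucomp_def torus_def)
  have maps_from: "recip_chart_inv b ` (torus \<times> UNIV) \<subseteq> Ucomp b"
    by (auto simp: recip_chart_inv_def Ucomp_def torus_def ffun_def)
  have "holo_map_on (Ucomp b) (recip_chart b)"
    by (rule holo_map_on_coordinatewise)
      (auto simp: recip_chart_def Ucomp_def intro!: holo_fun_on_inverse holo_fun_on_ffun holo_fun_on_snd_nth)
  moreover have "holo_map_on (torus \<times> UNIV) (recip_chart_inv b)"
    by (rule holo_map_on_coordinatewise)
      (auto simp: recip_chart_inv_def torus_def intro!: holo_fun_on_diff holo_fun_on_inverse
        holo_fun_on_fst_nth holo_fun_on_gfun holo_fun_on_snd_nth)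
  moreover have "bij_betw (recip_chart b) (Ucomp b) (torus \<times> UNIV)"
    by (rule bij_betw_byWitness[where f'="recip_chart_inv b"]) (simp_all add: maps_to maps_from)
  moreover have "bij_betw (recip_chart_inv b) (torus \<times> UNIV) (Ucomp b)"
    by (rule bij_betw_byWitness[where f'="recip_chart b"]) (simp_all add: maps_to maps_from)
  ultimately show ?thesis
    by (simp add: biholomorphic_on_def bij_betw_imp_surj_on)
qed

definition crit_lin :: "('n::finite \<Rightarrow> complex^'k::finite) \<Rightarrow> complex^'n \<Rightarrow> complex^'n \<Rightarrow> complex^'k" where
  "crit_lin b a w = (\<Sum>j\<in>UNIV. (a $ j * w $ j) *s b j)"

lemma crit_set_eq_recip_chart:
  "crit_set b a = {p \<in> Ucomp b. crit_lin b a (fst (recip_chart b p)) = 0}"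
  by (auto simp: crit_set_def crit_lin_def recip_chart_def vec_eq_iff sum_component divide_inverse mult_ac)

definition straighten ::
    "('n::finite \<Rightarrow> complex^'k::finite) \<Rightarrow> complex^'n \<Rightarrow> 'n set \<Rightarrow> ('n \<Rightarrow> 'k) \<Rightarrow> ('n, 'k) point \<Rightarrow> ('n, 'k) point" where
  "straighten b a J e q = ((\<chi> j. if j \<in> J then snd q $ e j else fst q $ j), crit_lin b a (fst q))"

lemma scaleR_eq_cscale: "r *\<^sub>R q = cscale (of_real r) q"
  by (simp add: cscale_def prod_eq_iff vec_eq_iff scaleR_conv_of_real [where 'a=complex])

lemma straighten_cscale: "straighten b a J e (cscale c q) = cscale c (straighten b a J e q)"
  by (auto simp: straighten_def crit_lin_def cscale_def vec_eq_iff sum_component sum_distrib_left algebra_simps)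

lemma linear_straighten: "linear (straighten b a J e)"
proof (rule linearI)
  show "straighten b a J e (p + q) = straighten b a J e p + straighten b a J e q" for p q
    by (auto simp: straighten_def crit_lin_def vec_eq_iff sum_component sum.distrib algebra_simps)
  show "straighten b a J e (r *\<^sub>R q) = r *\<^sub>R straighten b a J e q" for r q
    by (simp add: scaleR_eq_cscale straighten_cscale)
qed

lemma inj_straighten:
  assumes "inj_on b J" "vec.independent (b ` J)" "bij_betw e J UNIV" "\<forall>j. a $ j \<noteq> 0"
  shows "inj (straighten b a J e)"
  unfolding linear_inj_iff_eq_0[OF linear_straighten]
proof (intro allI impI)
  fix q assume q: "straighten b a J e q = 0"
  obtain w t where wt: "q = (w, t)" by force
  have fst_0: "fst (straighten b a J e q) $ j = 0" for j
    using q by simp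
  have w_outside: "w $ j = 0" if "j \<notin> J" for j
    using fst_0[of j] that by (simp add: straighten_def wt)
  have "t $ e j = 0" if "j \<in> J" for j
    using fst_0[of j] that by (simp add: straighten_def wt)
  then have t: "t = 0"
    using bij_betw_imp_surj_on[OF assms(3)] by (metis UNIV_I imageE vec_eq_iff zero_index)
  have "(\<Sum>j\<in>J. (a $ j * w $ j) *s b j) = crit_lin b a w"
    unfolding crit_lin_def by (rule sum.mono_neutral_left) (auto simp: w_outside)
  also have "\<dots> = 0"
    using q by (simp add: straighten_def wt zero_prod_def)
  finally have "a $ j * w $ j = 0" if "j \<in> J" for j
    using that by (intro independent_image_sum_eq_0[OF assms(1,2)]) simp_all
  then have "w = 0"
    using assms(4) w_outside by (auto simp: vec_eq_iff)
  then show "q = 0"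
    by (simp add: wt t zero_prod_def)
qed

theorem lemma3p5:
  fixes b :: "'n::finite \<Rightarrow> complex^'k::finite" and a :: "complex^'n"
  assumes "CARD('k) < CARD('n)"
    and "\<forall>j. gfun b j \<noteq> (\<lambda>t. 0)"
    and "vec.span (range b) = UNIV"
    and "\<forall>j. a $ j \<noteq> 0"
    and "crit_set b a \<noteq> {}"
  shows "analytic_subvariety (Ucomp b) (crit_set b a) \<and> smooth_submanifold_dimn (crit_set b a)"
proof -
  obtain J and e :: "'n \<Rightarrow> 'k" where J: "inj_on b J" "vec.independent (b ` J)" "bij_betw e J UNIV"
    using spanning_family_contains_basis[OF assms(3)] by blast
  define L where "L = straighten b a J e"
  have lin: "linear L" and inj: "inj L"
    using linear_straighten inj_straighten[OF J assms(4)] by (simp_all add: L_def)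
  define V where "V = L ` (torus \<times> UNIV)"
  have "open V"
    unfolding V_def using lin linear_injective_imp_surjective[OF lin inj refl]
    by (intro open_surjective_linear_image open_Times open_torus open_UNIV)
  have chart: "biholomorphic_on (Ucomp b) V (L \<circ> recip_chart b) (recip_chart_inv b \<circ> inv L)"
    unfolding V_def using biholomorphic_on_recip_chart
    by (rule biholomorphic_on_compose)
      (rule biholomorphic_on_linear_automorphism[OF lin inj], simp add: L_def straighten_cscale)
  have crit: "crit_set b a = {p \<in> Ucomp b. snd ((L \<circ> recip_chart b) p) = 0}"
    by (simp add: crit_set_eq_recip_chart L_def straighten_def)
  show ?thesis
    unfolding crit using analytic_subvariety_snd_eq_0[OF open_Ucomp]
      smooth_submanifold_dimn_snd_eq_0[OF open_Ucomp \<open>open V\<close> chart] chart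
    unfolding biholomorphic_on_def by blast
qed

end
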